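(* There exists a universal constant $c>0$ such that the following holds. Let $(E,d)$ be a complete separable metric space equipped with a Borel probability measure $\mu$, and let $k\geq 1$. For all sets $A_1,\ldots,A_k\subset E$ such that $\min_{i\neq j} d(A_i,A_j)>0$ and $(\mu(A_1),\ldots,\mu(A_k))\in\Delta_k$, the set $A=A_1\cup A_2\cup\cdots\cup A_k$ satisfies \[ \mu(A_r)\geq 1-(1-\mu(A))\exp\left(-c\min\left(r^2\lambda^{(k)}\,;\,r\sqrt{\lambda^{(k)}}\right)\right) \] for all $0<r\leq \frac12\min_{i\neq j} d(A_i,A_j)$.
   Context: For $A,B\subset E$, $d(A,B)=\inf\{d(x,y):x\in A,y\in B\}$. For $A\subset E$ and $r>0$, the $r$-enlargement is $A_r=\{x\in E:\exists y\in A,\ d(x,y)<r\}$. For $k\geq1$, $\Delta_k$ is the set of $(a_1,\ldots,a_k)\in[0,1]^k$ with $\sum_{j=1}^k a_j\leq 1$ and $a_i+\sum_{j=1}^k a_j\geq 1$ for every $i\in\{1,\ldots,k\}$. For $f:E\to\mathbb{R}$, the local Lipschitz constant is $|\nabla f|(x)=0$ if $x$ is isolated and $|\nabla f|(x)=\limsup_{y\to x}\frac{|f(x)-f(y)|}{d(x,y)}$ otherwise. $H^1(\mu)$ is the space of $f\in L^2(\mu)$ with $\int|\nabla f|^2\,d\mu<\infty$. For $k\geq0$, \[ \lambda^{(k)}=\inf_{V\subset H^1(\mu),\ \dim V=k+1}\ \sup_{f\in V\setminus\{0\}}\frac{\int|\nabla f|^2\,d\mu}{\int f^2\,d\mu}.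 \] *)

theory Defs
  imports "HOL-Analysis.Analysis" "HOL-Probability.Probability"
begin

definition metric_borel :: "'a set \<Rightarrow> ('a \<Rightarrow> 'a \<Rightarrow> real) \<Rightarrow> 'a set set" where
  "metric_borel E d = sigma_sets E (Collect (openin (Metric_space.mtopology E d)))"

text \<open>Distance between two sets, with the convention inf of the empty set = +infinity.\<close>
definition set_dist :: "('a \<Rightarrow> 'a \<Rightarrow> real) \<Rightarrow> 'a set \<Rightarrow> 'a set \<Rightarrow> ereal" where
  "set_dist d A B = Inf {ereal (d x y) | x y. x \<in> A \<and> y \<in> B}"

definition enlargement :: "'a set \<Rightarrow> ('a \<Rightarrow> 'a \<Rightarrow> real) \<Rightarrow> 'a set \<Rightarrow> real \<Rightarrow> 'a set" where
  "enlargement E d A r = {x \<in> E. \<exists>y\<in>A. d x y < r}"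

definition Delta :: "nat \<Rightarrow> (nat \<Rightarrow> real) set" where
  "Delta k = {a. (\<forall>i\<in>{1..k}. 0 \<le> a i \<and> a i \<le> 1) \<and> (\<Sum>j=1..k. a j) \<le> 1 \<and>
                  (\<forall>i\<in>{1..k}. a i + (\<Sum>j=1..k. a j) \<ge> 1)}"

definition isolated_pt :: "'a set \<Rightarrow> ('a \<Rightarrow> 'a \<Rightarrow> real) \<Rightarrow> 'a \<Rightarrow> bool" where
  "isolated_pt E d x \<longleftrightarrow> (\<exists>e>0. \<forall>y\<in>E. y \<noteq> x \<longrightarrow> e \<le> d x y)"

text \<open>Local Lipschitz constant: 0 at isolated points, otherwise
  limsup_{y->x} |f x - f y| / d(x,y) (written out as inf over eps of sup over the punctured ball).\<close>
definition local_lip :: "'a set \<Rightarrow> ('a \<Rightarrow> 'a \<Rightarrow> real) \<Rightarrow> ('a \<Rightarrow> real) \<Rightarrow> 'a \<Rightarrow> ennreal" where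
  "local_lip E d f x =
     (if isolated_pt E d x then 0
      else (INF e\<in>{e::real. e > 0}.
              SUP y\<in>{y\<in>E. 0 < d x y \<and> d x y < e}. ennreal (\<bar>f x - f y\<bar> / d x y)))"

definition dirichlet :: "'a set \<Rightarrow> ('a \<Rightarrow> 'a \<Rightarrow> real) \<Rightarrow> 'a measure \<Rightarrow> ('a \<Rightarrow> real) \<Rightarrow> ennreal" where
  "dirichlet E d \<mu> f = (\<integral>\<^sup>+ x. (local_lip E d f x)\<^sup>2 \<partial>\<mu>)"

definition sq_norm :: "'a measure \<Rightarrow> ('a \<Rightarrow> real) \<Rightarrow> ennreal" where
  "sq_norm \<mu> f = (\<integral>\<^sup>+ x. ennreal ((f x)\<^sup>2) \<partial>\<mu>)"

definition H1 :: "'a set \<Rightarrow> ('a \<Rightarrow> 'a \<Rightarrow> real) \<Rightarrow> 'a measure \<Rightarrow> ('a \<Rightarrow> real) set" where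
  "H1 E d \<mu> = {f. f \<in> borel_measurable \<mu> \<and> sq_norm \<mu> f < \<infinity> \<and> dirichlet E d \<mu> f < \<infinity>}"

text \<open>(k+1)-dimensional subspaces of H^1(mu) (as a subspace of L^2(mu)) are exactly the spans of
  k+1 functions g_0..g_k of H^1 that are linearly independent in L^2(mu), i.e. no nontrivial
  linear combination vanishes mu-a.e.; the nonzero elements of the span are the combinations
  with a nonzero coefficient vector.\<close>
definition L2_indep :: "'a measure \<Rightarrow> nat \<Rightarrow> (nat \<Rightarrow> 'a \<Rightarrow> real) \<Rightarrow> bool" where
  "L2_indep \<mu> k g \<longleftrightarrow>
     (\<forall>c::nat \<Rightarrow> real. (AE x in \<mu>. (\<Sum>i\<le>k. c i * g i x) = 0) \<longrightarrow> (\<forall>i\<le>k. c i = 0))"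

definition lambda_k :: "'a set \<Rightarrow> ('a \<Rightarrow> 'a \<Rightarrow> real) \<Rightarrow> 'a measure \<Rightarrow> nat \<Rightarrow> ennreal" where
  "lambda_k E d \<mu> k =
     (INF g\<in>{g. (\<forall>i\<le>k. g i \<in> H1 E d \<mu>) \<and> L2_indep \<mu> k g}.
        SUP c\<in>{c::nat \<Rightarrow> real. \<exists>i\<le>k. c i \<noteq> 0}.
          dirichlet E d \<mu> (\<lambda>x. \<Sum>i\<le>k. c i * g i x) / sq_norm \<mu> (\<lambda>x. \<Sum>i\<le>k. c i * g i x))"

text \<open>exp(-c min(r^2 lambda, r sqrt lambda)), with the value 0 when lambda = +infinity
  (inf over the empty family).\<close>
definition conc_factor :: "real \<Rightarrow> real \<Rightarrow> ennreal \<Rightarrow> real" where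
  "conc_factor c r lam =
     (if lam = \<infinity> then 0
      else exp (- c * min (r\<^sup>2 * enn2real lam) (r * sqrt (enn2real lam))))"

end

theory Submission
  imports Defs
begin

(*
  Write S u = 1 - \<mu>(A_u) for the mass outside the u-enlargement A_u of A = A_1 \<union> ... \<union> A_k,
  and S0 = 1 - \<mu>(A). As the A_i are disjoint, the condition \<Delta>_k gives \<mu>(A_i) \<ge> S0 for every i.

  Fix 0 < \<rho> \<le> r and t \<ge> \<rho>, and test the min-max definition of \<lambda>^(k) with k + 1 cut-off
  functions, all (4/\<rho>)-Lipschitz: \<phi>_i (i \<ge> 1) equals 1 near A_i and vanishes at distance \<rho>/2
  from it, and \<phi>_0 vanishes near A_t and equals 1 outside A_(t+\<rho>). As the A_i are 2r-separated,
  near every point at most one \<phi>_j is non-zero, so the energy of \<Sum> c_j \<phi>_j is at most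
  16/\<rho>^2 (c_0^2 (S t - S (t+\<rho>)) + \<Sum>_(i\<ge>1) c_i^2 (S0 - S \<rho>)), while its squared norm is at
  least c_0^2 S (t+\<rho>) + \<Sum>_(i\<ge>1) c_i^2 S0. Hence
    \<lambda> \<rho>^2 / 16 \<le> max ((S t - S (t+\<rho>)) / S (t+\<rho>)) ((S0 - S \<rho>) / S0).
  For \<rho> = t = r/2 this gives S r (1 + \<lambda> r^2 / 64) \<le> S0, which settles the case r \<surd>\<lambda> \<le> 64.
  Once \<lambda> \<rho>^2 / 16 > 1 the first ratio must dominate (the second is at most 1), so S drops by
  the factor 1 + \<lambda> \<rho>^2 / 16 over every step of length \<rho>; iterating with \<rho> = 8 / \<surd>\<lambda>
  gives exponential decay.
  This yields the constant c = 1/128.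
*)

definition clamp01 :: "real \<Rightarrow> real" where
  "clamp01 v = min 1 (max 0 v)"

lemma clamp01_lipschitz: "\<bar>clamp01 a - clamp01 b\<bar> \<le> \<bar>a - b\<bar>"
  unfolding clamp01_def by (simp add: min_def max_def abs_if)

lemma clamp01_eq_1: "1 \<le> v \<Longrightarrow> clamp01 v = 1"
  and clamp01_eq_0: "v \<le> 0 \<Longrightarrow> clamp01 v = 0"
  unfolding clamp01_def by simp_all

lemma exp_le_one_plus_double:
  fixes z :: real
  assumes "0 \<le> z" "z \<le> 1"
  shows "exp z \<le> 1 + 2 * z"
proof -
  have "exp z \<le> 1 + z + z\<^sup>2" by (rule exp_bound) (use assms in auto)
  moreover have "z\<^sup>2 \<le> z" using assms by (simp add: power2_eq_square mult_left_le)
  ultimately show ?thesis by simp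
qed

lemma mediant_le_max:
  fixes a1 a2 b1 b2 x y :: real
  assumes "0 \<le> x" "0 \<le> y" "0 < b1" "0 < b2"
  shows "a1 * x + a2 * y \<le> max (a1 / b1) (a2 / b2) * (b1 * x + b2 * y)"
proof -
  define m where "m = max (a1 / b1) (a2 / b2)"
  have "a1 \<le> m * b1" "a2 \<le> m * b2"
    using assms(3,4) by (auto simp: m_def pos_divide_le_eq[symmetric])
  hence "a1 * x \<le> m * b1 * x" "a2 * y \<le> m * b2 * y"
    using assms(1,2) by (auto intro: mult_right_mono)
  thus ?thesis unfolding m_def[symmetric] by (simp add: algebra_simps)
qed

lemma geometric_decay:
  fixes a :: "nat \<Rightarrow> real" and q :: real
  assumes "0 \<le> q" and step: "\<And>n. n < N \<Longrightarrow> q * a (Suc n) \<le> a n"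
  shows "n \<le> N \<Longrightarrow> q ^ n * a n \<le> a 0"
proof (induction n)
  case (Suc n)
  have "q ^ Suc n * a (Suc n) = q ^ n * (q * a (Suc n))" by simp
  also have "\<dots> \<le> q ^ n * a n" using Suc.prems assms(1) by (intro mult_left_mono step) auto
  also have "\<dots> \<le> a 0" using Suc by simp
  finally show ?case .
qed simp

lemma ennreal_divide_le_of_le_mult:
  fixes a b M :: ennreal
  assumes "a \<le> M * b"
  shows "a / b \<le> M"
proof (cases "b = 0")
  case True thus ?thesis using assms by (simp add: divide_ennreal_def)
next
  case False thus ?thesis using assms by (intro divide_le_posI_ennreal) (auto simp: mult.commute zero_less_iff_neq_zero)
qed

lemma sum_eq_single_term:
  assumes "finite I" "i \<in> I" "\<And>j. j \<in> I \<Longrightarrow> j \<noteq> i \<Longrightarrow> f j = 0"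
  shows "sum f I = f i"
  using sum.remove[OF assms(1,2), of f] assms(3) by (simp add: sum.neutral)

lemma power2_le_ennreal:
  assumes "x \<le> ennreal a" "0 \<le> a" "a\<^sup>2 \<le> b"
  shows "x\<^sup>2 \<le> ennreal b"
proof -
  have "x\<^sup>2 \<le> (ennreal a)\<^sup>2" using assms(1) by (rule power_mono) simp
  also have "\<dots> \<le> ennreal b" using assms(2,3) by (simp add: ennreal_power ennreal_leI)
  finally show ?thesis .
qed

lemma decay_small_scale:
  fixes l r s S0 :: real
  assumes "0 \<le> l" "0 \<le> r" "0 \<le> S0" "r * sqrt l \<le> 64" and first_step: "s * (1 + l * r\<^sup>2 / 64) \<le> S0"
  shows "s \<le> S0 * exp (- (1/128) * min (r\<^sup>2 * l) (r * sqrt l))"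
proof -
  define m where "m = min (r\<^sup>2 * l) (r * sqrt l)"
  have m: "0 \<le> m" "m \<le> l * r\<^sup>2" "m \<le> 64"
    unfolding m_def using assms(1,2,4) by (auto simp: mult.commute)
  have pos: "0 < 1 + l * r\<^sup>2 / 64" using assms(1) by (simp add: add_pos_nonneg)
  have "exp (m / 128) \<le> 1 + 2 * (m / 128)" by (rule exp_le_one_plus_double) (use m in auto)
  also have "\<dots> \<le> 1 + l * r\<^sup>2 / 64" using m(2) by simp
  finally have exp_le: "exp (m / 128) \<le> 1 + l * r\<^sup>2 / 64" .
  have "s \<le> S0 / (1 + l * r\<^sup>2 / 64)" using first_step pos by (simp add: pos_le_divide_eq)
  also have "\<dots> \<le> S0 / exp (m / 128)" using exp_le assms(3) pos by (intro divide_left_mono) auto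
  also have "\<dots> = S0 * exp (- (1/128) * m)" by (simp add: exp_minus field_simps)
  finally show ?thesis unfolding m_def .
qed

lemma decay_large_scale:
  fixes S :: "real \<Rightarrow> real" and S0 l r :: real
  assumes "0 \<le> l" "0 \<le> S0" "64 < r * sqrt l"
    and antimono: "\<And>u v. 0 < v \<Longrightarrow> v \<le> u \<Longrightarrow> S u \<le> S v"
    and bounded: "\<And>u. 0 < u \<Longrightarrow> S u \<le> S0"
    and step: "\<And>\<rho> t. 0 < \<rho> \<Longrightarrow> \<rho> \<le> t \<Longrightarrow> t + \<rho> \<le> r \<Longrightarrow> 1 < l * \<rho>\<^sup>2 / 16 \<Longrightarrow>
                 S (t + \<rho>) * (1 + l * \<rho>\<^sup>2 / 16) \<le> S t"
  shows "S r \<le> S0 * exp (- (1/128) * min (r\<^sup>2 * l) (r * sqrt l))"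
proof -
  define x where "x = r * sqrt l"
  have "0 < sqrt l" using assms(1,3) by (cases "l = 0") auto
  define \<rho> where "\<rho> = 8 / sqrt l"
  \<comment> \<open>at this scale each application of step contracts by the factor 1 + l \<rho>^2 / 16 = 5\<close>
  have \<rho>: "0 < \<rho>" "l * \<rho>\<^sup>2 / 16 = 4" "r = x / 8 * \<rho>"
    unfolding \<rho>_def x_def using \<open>0 < sqrt l\<close> assms(1) by (auto simp: power_divide)
  define N where "N = nat (\<lfloor>x / 8\<rfloor> - 1)"
  have "8 \<le> \<lfloor>x / 8\<rfloor>" using assms(3) by (simp add: x_def le_floor_iff)
  hence "real N = of_int \<lfloor>x / 8\<rfloor> - 1" unfolding N_def by simp
  hence N: "real N + 1 \<le> x / 8" "x / 8 - 2 < real N"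
    using of_int_floor_le[of "x / 8"] real_of_int_floor_gt_diff_one[of "x / 8"] by linarith+
  have reach: "real (Suc N) * \<rho> \<le> r"
    unfolding \<rho>(3) using N(1) \<rho>(1) by (intro mult_right_mono) auto
  define a where "a n = S (real (Suc n) * \<rho>)" for n
  have "5 ^ N * a N \<le> a 0"
  proof (rule geometric_decay)
    fix n assume "n < N"
    have "real (Suc (Suc n)) * \<rho> \<le> real (Suc N) * \<rho>"
      using \<open>n < N\<close> \<rho>(1) by (intro mult_right_mono) auto
    hence "S (real (Suc n) * \<rho> + \<rho>) * (1 + l * \<rho>\<^sup>2 / 16) \<le> S (real (Suc n) * \<rho>)"
      using reach \<rho> by (intro step) (auto simp: algebra_simps)
    thus "5 * a (Suc n) \<le> a n" unfolding a_def using \<rho>(2) by (simp add: algebra_simps)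
  qed auto
  have "5 ^ N * S r \<le> 5 ^ N * a N" unfolding a_def using reach \<rho>(1) by (simp add: antimono)
  also have "\<dots> \<le> S0" using \<open>5 ^ N * a N \<le> a 0\<close> bounded[of \<rho>] \<rho>(1) by (simp add: a_def)
  finally have "S r \<le> S0 / 5 ^ N" by (simp add: pos_le_divide_eq mult.commute)
  also have "\<dots> \<le> S0 / exp 1 ^ N"
    using exp_le_one_plus_double[of 1] assms(2) by (intro divide_left_mono power_mono) auto
  also have "\<dots> = S0 * exp (- real N)" by (simp add: exp_minus divide_inverse exp_of_nat_mult[symmetric])
  also have "\<dots> \<le> S0 * exp (- (1/128) * x)" using N(2) assms(2,3) by (intro mult_left_mono) (auto simp: x_def)
  also have "x = min (r\<^sup>2 * l) (r * sqrt l)"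
  proof -
    have "x * 1 \<le> x * x" using assms(3) by (intro mult_left_mono) (auto simp: x_def)
    moreover have "x * x = r\<^sup>2 * l" using assms(1) unfolding x_def by (simp add: power2_eq_square)
    ultimately show ?thesis unfolding x_def by simp
  qed
  finally show ?thesis .
qed

lemma concentration_decay:
  fixes S :: "real \<Rightarrow> real" and S0 l r :: real
  assumes "0 \<le> l" "0 \<le> r" "0 \<le> S0"
    and antimono: "\<And>u v. 0 < v \<Longrightarrow> v \<le> u \<Longrightarrow> S u \<le> S v"
    and bounded: "\<And>u. 0 < u \<Longrightarrow> S u \<le> S0"
    and first_step: "S r * (1 + l * r\<^sup>2 / 64) \<le> S0"
    and step: "\<And>\<rho> t. 0 < \<rho> \<Longrightarrow> \<rho> \<le> t \<Longrightarrow> t + \<rho> \<le> r \<Longrightarrow> 1 < l * \<rho>\<^sup>2 / 16 \<Longrightarrow>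
                 S (t + \<rho>) * (1 + l * \<rho>\<^sup>2 / 16) \<le> S t"
  shows "S r \<le> S0 * exp (- (1/128) * min (r\<^sup>2 * l) (r * sqrt l))"
proof (cases "r * sqrt l \<le> 64")
  case True
  show ?thesis by (rule decay_small_scale[OF assms(1-3) True first_step])
next
  case False
  show ?thesis by (rule decay_large_scale[OF assms(1,3) _ antimono bounded step]) (use False in simp)
qed

section \<open>Distance to a set and enlargements\<close>

context Metric_space
begin

(* Inf of the empty set of reals is unspecified, hence the hypotheses S \<noteq> {} below. *)
definition minfdist :: "'a \<Rightarrow> 'a set \<Rightarrow> real" where
  "minfdist x S = Inf (d x ` S)"

lemma minfdist_le: "y \<in> S \<Longrightarrow> minfdist x S \<le> d x y"
  unfolding minfdist_def by (rule cInf_lower) (auto intro: bdd_belowI[where m=0])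

lemma minfdist_greatest: "S \<noteq> {} \<Longrightarrow> (\<And>y. y \<in> S \<Longrightarrow> u \<le> d x y) \<Longrightarrow> u \<le> minfdist x S"
  unfolding minfdist_def by (rule cInf_greatest) auto

lemma minfdist_less_iff: "S \<noteq> {} \<Longrightarrow> minfdist x S < u \<longleftrightarrow> (\<exists>y\<in>S. d x y < u)"
  unfolding minfdist_def by (subst cInf_less_iff) (auto intro: bdd_belowI[where m=0])

lemma minfdist_eq_0: "x \<in> S \<Longrightarrow> S \<subseteq> M \<Longrightarrow> minfdist x S = 0"
  using minfdist_le[of x S x] minfdist_greatest[of S 0 x] by (auto simp: subset_eq)

lemma minfdist_triangle:
  assumes "S \<subseteq> M" "S \<noteq> {}" "x \<in> M" "z \<in> M"
  shows "minfdist x S \<le> d x z + minfdist z S"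
proof -
  have "minfdist x S - d x z \<le> minfdist z S"
  proof (rule minfdist_greatest[OF assms(2)])
    fix y assume "y \<in> S"
    hence "minfdist x S \<le> d x z + d z y"
      using minfdist_le[of y S x] triangle[of x z y] assms by auto
    thus "minfdist x S - d x z \<le> d z y" by simp
  qed
  thus ?thesis by simp
qed

lemma minfdist_lipschitz:
  assumes "S \<subseteq> M" "S \<noteq> {}" "x \<in> M" "z \<in> M"
  shows "\<bar>minfdist x S - minfdist z S\<bar> \<le> d x z"
  using minfdist_triangle[OF assms] minfdist_triangle[OF assms(1,2,4,3)] commute[of x z] by auto

lemma enlargement_eq: "S \<noteq> {} \<Longrightarrow> enlargement M d S u = {x \<in> M. minfdist x S < u}"
  unfolding enlargement_def by (auto simp: minfdist_less_iff)

lemma enlargement_mono: "v \<le> u \<Longrightarrow> enlargement M d S v \<subseteq> enlargement M d S u"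
  unfolding enlargement_def by force

lemma subset_enlargement: "S \<subseteq> M \<Longrightarrow> 0 < u \<Longrightarrow> S \<subseteq> enlargement M d S u"
  unfolding enlargement_def by force

lemma enlargement_enlargement:
  assumes "S \<subseteq> M"
  shows "enlargement M d (enlargement M d S t) u \<subseteq> enlargement M d S (t + u)"
proof
  fix x assume "x \<in> enlargement M d (enlargement M d S t) u"
  then obtain y z where "x \<in> M" "y \<in> M" "z \<in> S" "d x y < u" "d y z < t"
    unfolding enlargement_def by auto
  moreover have "d x z \<le> d x y + d y z" using calculation assms by (intro triangle) auto
  ultimately have "d x z < t + u" by linarith
  thus "x \<in> enlargement M d S (t + u)" using \<open>x \<in> M\<close> \<open>z \<in> S\<close> unfolding enlargement_def by auto
qed

lemma openin_enlargement: "S \<subseteq> M \<Longrightarrow> openin mtopology (enlargement M d S u)"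
  unfolding openin_mtopology
proof (intro conjI allI impI)
  show "enlargement M d S u \<subseteq> M" unfolding enlargement_def by auto
  fix x assume "S \<subseteq> M" "x \<in> enlargement M d S u"
  then obtain y where y: "x \<in> M" "y \<in> S" "y \<in> M" "d x y < u" unfolding enlargement_def by auto
  have "mball x (u - d x y) \<subseteq> enlargement M d S u"
  proof
    fix z assume z: "z \<in> mball x (u - d x y)"
    have "d z y \<le> d z x + d x y" using z y by (intro triangle) auto
    also have "\<dots> < u" using z commute[of z x] by auto
    finally show "z \<in> enlargement M d S u" using z y unfolding enlargement_def by auto
  qed
  thus "\<exists>r>0. mball x r \<subseteq> enlargement M d S u" using y(4) by (intro exI[of _ "u - d x y"]) auto
qed

lemma openin_in_metric_borel: "openin mtopology U \<Longrightarrow> U \<in> metric_borel M d"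
  unfolding metric_borel_def by (auto intro: sigma_sets.Basic)

lemma lipschitz_borel_measurable:
  assumes space: "space \<mu> = M" and sets: "sets \<mu> = metric_borel M d"
    and lip: "\<And>x y. x \<in> M \<Longrightarrow> y \<in> M \<Longrightarrow> \<bar>f x - f y\<bar> \<le> K * d x y"
  shows "f \<in> borel_measurable \<mu>"
  unfolding borel_measurable_iff_less
proof
  fix a
  have "openin mtopology {x \<in> M. f x < a}"
    unfolding openin_mtopology
  proof (intro conjI allI impI)
    fix x assume x: "x \<in> {x \<in> M. f x < a}"
    define e where "e = (a - f x) / (\<bar>K\<bar> + 1)"
    have "mball x e \<subseteq> {x \<in> M. f x < a}"
    proof
      fix y assume y: "y \<in> mball x e"
      have xy: "x \<in> M" "y \<in> M" using y by auto
      have "f y - f x \<le> \<bar>f x - f y\<bar>" by linarith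
      also have "\<dots> \<le> K * d x y" using lip[OF xy] .
      also have "\<dots> \<le> \<bar>K\<bar> * d x y" by (rule mult_right_mono) auto
      finally have "f y \<le> f x + \<bar>K\<bar> * d x y" by simp
      also have "\<bar>K\<bar> * d x y \<le> \<bar>K\<bar> * e" using y by (auto intro!: mult_left_mono)
      also have "\<bar>K\<bar> * e < a - f x" using x by (auto simp: e_def field_simps)
      finally show "y \<in> {x \<in> M. f x < a}" using y by auto
    qed
    moreover have "e > 0" using x by (auto simp: e_def)
    ultimately show "\<exists>r>0. mball x r \<subseteq> {x \<in> M. f x < a}" by blast
  qed auto
  thus "{x \<in> space \<mu>. f x < a} \<in> sets \<mu>" using openin_in_metric_borel space sets by simp
qed

end

section \<open>Bounding the min-max value by test functions\<close>

lemma local_lip_le: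
  assumes "0 < \<delta>" "0 \<le> K" "\<And>y. y \<in> E \<Longrightarrow> d x y < \<delta> \<Longrightarrow> \<bar>F x - F y\<bar> \<le> K * d x y"
  shows "local_lip E d F x \<le> ennreal K"
proof (cases "isolated_pt E d x")
  case False
  have "local_lip E d F x \<le> (SUP y\<in>{y\<in>E. 0 < d x y \<and> d x y < \<delta>}. ennreal (\<bar>F x - F y\<bar> / d x y))"
    unfolding local_lip_def using False assms(1) by (auto intro!: INF_lower)
  also have "\<dots> \<le> ennreal K"
    using assms(3) by (intro SUP_least ennreal_leI) (auto simp: pos_divide_le_eq)
  finally show ?thesis .
qed (simp add: local_lip_def)

lemma local_lip_locally_constant:
  assumes "0 < \<delta>" "\<And>y. y \<in> E \<Longrightarrow> d x y < \<delta> \<Longrightarrow> F y = F x"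
  shows "local_lip E d F x = 0"
  using local_lip_le[of \<delta> 0 E d x F] assms by auto

lemma (in Metric_space) local_lip_le_scaled:
  assumes "x \<in> M" "0 < \<delta>" "0 \<le> K"
    and near: "\<And>y. y \<in> M \<Longrightarrow> d x y < \<delta> \<Longrightarrow> F y = c * h y"
    and lip: "\<And>y. y \<in> M \<Longrightarrow> \<bar>h x - h y\<bar> \<le> K * d x y"
  shows "local_lip M d F x \<le> ennreal (\<bar>c\<bar> * K)"
proof (rule local_lip_le[OF assms(2)])
  fix y assume y: "y \<in> M" "d x y < \<delta>"
  have "\<bar>F x - F y\<bar> = \<bar>c\<bar> * \<bar>h x - h y\<bar>"
    using near[OF y] near[of x] assms(1,2) by (simp add: abs_mult[symmetric] right_diff_distrib)
  also have "\<dots> \<le> \<bar>c\<bar> * (K * d x y)" by (rule mult_left_mono[OF lip[OF y(1)]]) simp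
  finally show "\<bar>F x - F y\<bar> \<le> \<bar>c\<bar> * K * d x y" by (simp add: mult_ac)
qed (use assms(3) in simp)

lemma (in Metric_space) lipschitz_in_H1:
  assumes space: "space \<mu> = M" and sets: "sets \<mu> = metric_borel M d" and "finite_measure \<mu>"
    and "0 \<le> K" and lip: "\<And>x y. x \<in> M \<Longrightarrow> y \<in> M \<Longrightarrow> \<bar>f x - f y\<bar> \<le> K * d x y"
    and bounded: "\<And>x. x \<in> M \<Longrightarrow> \<bar>f x\<bar> \<le> B"
  shows "f \<in> H1 M d \<mu>"
proof -
  interpret finite_measure \<mu> by fact
  have "sq_norm \<mu> f \<le> (\<integral>\<^sup>+x. ennreal (B\<^sup>2) \<partial>\<mu>)"
    unfolding sq_norm_def
  proof (intro nn_integral_mono ennreal_leI)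
    fix x assume "x \<in> space \<mu>"
    hence "\<bar>f x\<bar> \<le> \<bar>B\<bar>" using bounded space by force
    thus "(f x)\<^sup>2 \<le> B\<^sup>2" by (simp add: abs_le_square_iff)
  qed
  moreover have "dirichlet M d \<mu> f \<le> (\<integral>\<^sup>+x. ennreal (K\<^sup>2) \<partial>\<mu>)"
    unfolding dirichlet_def
  proof (intro nn_integral_mono)
    fix x assume "x \<in> space \<mu>"
    have "local_lip M d f x \<le> ennreal K"
      using lip \<open>x \<in> space \<mu>\<close> space by (intro local_lip_le[of 1]) (auto simp: \<open>0 \<le> K\<close>)
    thus "(local_lip M d f x)\<^sup>2 \<le> ennreal (K\<^sup>2)"
      using \<open>0 \<le> K\<close> by (rule power2_le_ennreal) simp
  qed
  moreover have "(\<integral>\<^sup>+x. ennreal c \<partial>\<mu>) < \<infinity>" for c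
    using emeasure_finite[of "space \<mu>"] by (simp add: ennreal_mult_eq_top_iff less_top[symmetric])
  moreover have "f \<in> borel_measurable \<mu>" by (rule lipschitz_borel_measurable[OF space sets lip])
  ultimately show ?thesis unfolding H1_def by (auto dest: le_less_trans)
qed

lemma sq_norm_ge_plateaus:
  fixes X :: "'i \<Rightarrow> 'a set"
  assumes "finite I" "\<And>j. j \<in> I \<Longrightarrow> X j \<in> sets \<mu>" "disjoint_family_on X I"
    and plateau: "\<And>j x. j \<in> I \<Longrightarrow> x \<in> X j \<Longrightarrow> f x = c j"
  shows "(\<Sum>j\<in>I. ennreal ((c j)\<^sup>2) * emeasure \<mu> (X j)) \<le> sq_norm \<mu> f"
proof -
  have "(\<Sum>j\<in>I. ennreal ((c j)\<^sup>2) * emeasure \<mu> (X j))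
      = (\<Sum>j\<in>I. \<integral>\<^sup>+x. ennreal ((c j)\<^sup>2) * indicator (X j) x \<partial>\<mu>)"
    using assms(2) by (intro sum.cong refl nn_integral_cmult_indicator[symmetric])
  also have "\<dots> = (\<integral>\<^sup>+x. (\<Sum>j\<in>I. ennreal ((c j)\<^sup>2) * indicator (X j) x) \<partial>\<mu>)"
    using assms(2) by (intro nn_integral_sum[symmetric]) auto
  also have "\<dots> \<le> sq_norm \<mu> f"
    unfolding sq_norm_def
  proof (rule nn_integral_mono)
    fix x
    show "(\<Sum>j\<in>I. ennreal ((c j)\<^sup>2) * indicator (X j) x) \<le> ennreal ((f x)\<^sup>2)"
    proof (cases "\<exists>j\<in>I. x \<in> X j")
      case True
      then obtain j where j: "j \<in> I" "x \<in> X j" by blast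
      have "(\<Sum>i\<in>I. ennreal ((c i)\<^sup>2) * indicator (X i) x) = (\<Sum>i\<in>I. if i = j then ennreal ((c j)\<^sup>2) else 0)"
        using assms(3) j by (intro sum.cong) (auto simp: disjoint_family_on_def indicator_def)
      thus ?thesis using j(1) assms(1) plateau[OF j] by simp
    qed auto
  qed
  finally show ?thesis .
qed

lemma L2_indep_of_plateaus:
  assumes "\<And>j. j \<le> k \<Longrightarrow> X j \<in> sets \<mu>" "disjoint_family_on X {..k}"
    and "\<And>j. j \<le> k \<Longrightarrow> 0 < emeasure \<mu> (X j)"
    and "\<And>i j x. i \<le> k \<Longrightarrow> j \<le> k \<Longrightarrow> x \<in> X j \<Longrightarrow> g i x = (if i = j then 1 else 0)"
  shows "L2_indep \<mu> k g"
  unfolding L2_indep_def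
proof (rule allI, rule impI)
  fix c :: "nat \<Rightarrow> real"
  assume ae: "AE x in \<mu>. (\<Sum>i\<le>k. c i * g i x) = 0"
  have "sq_norm \<mu> (\<lambda>x. \<Sum>i\<le>k. c i * g i x) = (\<integral>\<^sup>+x. 0 \<partial>\<mu>)"
    unfolding sq_norm_def by (rule nn_integral_cong_AE) (use ae in auto)
  hence sq_norm_0: "sq_norm \<mu> (\<lambda>x. \<Sum>i\<le>k. c i * g i x) = 0" by simp
  have "(\<Sum>i\<le>k. c i * g i x) = c j" if "j \<le> k" "x \<in> X j" for j x
  proof -
    have "(\<Sum>i\<le>k. c i * g i x) = c j * g j x"
      by (rule sum_eq_single_term) (use that assms(4) in auto)
    thus ?thesis using assms(4)[OF that(1) that] by simp
  qed
  hence "(\<Sum>j\<le>k. ennreal ((c j)\<^sup>2) * emeasure \<mu> (X j)) \<le> sq_norm \<mu> (\<lambda>x. \<Sum>i\<le>k. c i * g i x)"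
    using assms(1,2) by (intro sq_norm_ge_plateaus) auto
  hence "c j = 0 \<or> emeasure \<mu> (X j) = 0" if "j \<le> k" for j
    using that sq_norm_0 by simp
  thus "\<forall>i\<le>k. c i = 0" using assms(3) by (metis order_less_irrefl)
qed

lemma lambda_k_le:
  assumes "\<And>i. i \<le> k \<Longrightarrow> g i \<in> H1 E d \<mu>" "L2_indep \<mu> k g"
    and "\<And>c. dirichlet E d \<mu> (\<lambda>x. \<Sum>i\<le>k. c i * g i x) \<le> M * sq_norm \<mu> (\<lambda>x. \<Sum>i\<le>k. c i * g i x)"
  shows "lambda_k E d \<mu> k \<le> M"
proof -
  have "lambda_k E d \<mu> k \<le> (SUP c\<in>{c. \<exists>i\<le>k. c i \<noteq> 0}.
          dirichlet E d \<mu> (\<lambda>x. \<Sum>i\<le>k. c i * g i x) / sq_norm \<mu> (\<lambda>x. \<Sum>i\<le>k. c i * g i x))"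
    unfolding lambda_k_def using assms(1,2) by (intro INF_lower) auto
  also have "\<dots> \<le> M" using assms(3) by (intro SUP_least ennreal_divide_le_of_le_mult)
  finally show ?thesis .
qed

lemma (in finite_measure) nn_integral_two_indicators:
  assumes "R0 \<in> sets M" "R1 \<in> sets M" "0 \<le> a" "0 \<le> b"
  shows "(\<integral>\<^sup>+x. ennreal (a * indicator R0 x + b * indicator R1 x) \<partial>M) = ennreal (a * measure M R0 + b * measure M R1)"
proof -
  have "(\<integral>\<^sup>+x. ennreal (a * indicator R0 x + b * indicator R1 x) \<partial>M) = ennreal (\<integral>x. a * indicator R0 x + b * indicator R1 x \<partial>M)"
    using assms by (intro nn_integral_eq_integral) (auto simp: less_top[symmetric])
  also have "(\<integral>x. a * indicator R0 x + b * indicator R1 x \<partial>M) = a * measure M R0 + b * measure M R1"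
    using assms by (subst Bochner_Integration.integral_add) (auto simp: less_top[symmetric])
  finally show ?thesis .
qed

section \<open>Concentration around separated sets\<close>

locale separated_sets = Metric_space E d for E d +
  fixes \<mu> :: "'a measure" and k :: nat and A :: "nat \<Rightarrow> 'a set" and r :: real
  assumes space_eq: "space \<mu> = E" and sets_eq: "sets \<mu> = metric_borel E d"
    and prob: "prob_space \<mu>"
    and A_sets: "\<And>i. i \<in> {1..k} \<Longrightarrow> A i \<in> sets \<mu>"
    and A_separated: "\<And>i j. i \<in> {1..k} \<Longrightarrow> j \<in> {1..k} \<Longrightarrow> i \<noteq> j \<Longrightarrow>
                        ereal (2 * r) \<le> set_dist d (A i) (A j)"
    and A_Delta: "(\<lambda>i. measure \<mu> (A i)) \<in> Delta k"
    and r_pos: "0 < r" and k_pos: "1 \<le> k"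
begin

sublocale prob_space \<mu> by (rule prob)

definition U :: "'a set" where "U = (\<Union>i\<in>{1..k}. A i)"

abbreviation enl :: "real \<Rightarrow> 'a set" where "enl u \<equiv> enlargement E d U u"

definition S0 :: real where "S0 = 1 - measure \<mu> U"

definition S :: "real \<Rightarrow> real" where "S u = 1 - measure \<mu> (enl u)"

lemma A_subset: "i \<in> {1..k} \<Longrightarrow> A i \<subseteq> E"
  using sets.sets_into_space[OF A_sets] space_eq by auto

lemma U_subset: "U \<subseteq> E"
  unfolding U_def using A_subset by blast

lemma U_sets: "U \<in> sets \<mu>"
  unfolding U_def using A_sets by auto

lemma enl_sets: "enl u \<in> sets \<mu>"
  using openin_in_metric_borel[OF openin_enlargement[OF U_subset]] sets_eq by simp

lemma dist_A_ge:
  assumes "i \<in> {1..k}" "j \<in> {1..k}" "i \<noteq> j" "a \<in> A i" "b \<in> A j"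
  shows "2 * r \<le> d a b"
proof -
  have "set_dist d (A i) (A j) \<le> ereal (d a b)"
    unfolding set_dist_def using assms(4,5) by (auto intro!: Inf_lower)
  from order_trans[OF A_separated[OF assms(1-3)] this] show ?thesis by simp
qed

lemma A_disjoint: "disjoint_family_on A {1..k}"
  unfolding disjoint_family_on_def using dist_A_ge r_pos A_subset by fastforce

lemma minfdist_A_sum_ge:
  assumes "i \<in> {1..k}" "j \<in> {1..k}" "i \<noteq> j" "A i \<noteq> {}" "A j \<noteq> {}" "y \<in> E"
  shows "2 * r \<le> minfdist y (A i) + minfdist y (A j)"
proof -
  have "2 * r - minfdist y (A i) \<le> minfdist y (A j)"
  proof (rule minfdist_greatest[OF assms(5)])
    fix b assume b: "b \<in> A j"
    have "2 * r - d y b \<le> minfdist y (A i)"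
    proof (rule minfdist_greatest[OF assms(4)])
      fix a assume a: "a \<in> A i"
      have "2 * r \<le> d a b" by (rule dist_A_ge[OF assms(1-3) a b])
      also have "\<dots> \<le> d a y + d y b" using a b assms A_subset by (intro triangle) auto
      finally show "2 * r - d y b \<le> d y a" using commute[of a y] by simp
    qed
    thus "2 * r - minfdist y (A i) \<le> d y b" by simp
  qed
  thus ?thesis by simp
qed

lemma S0_le_measure_A: "i \<in> {1..k} \<Longrightarrow> S0 \<le> measure \<mu> (A i)"
proof -
  assume i: "i \<in> {1..k}"
  have "measure \<mu> U = (\<Sum>j\<in>{1..k}. measure \<mu> (A j))"
    unfolding U_def using A_sets A_disjoint by (intro finite_measure_finite_Union) auto
  moreover have "1 \<le> measure \<mu> (A i) + (\<Sum>j=1..k. measure \<mu> (A j))"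
    using A_Delta i unfolding Delta_def by auto
  ultimately show ?thesis unfolding S0_def by simp
qed

lemma S_nonneg: "0 \<le> S u"
  unfolding S_def by simp

lemma S_le_S0: "0 < u \<Longrightarrow> S u \<le> S0"
  unfolding S_def S0_def
  using finite_measure_mono[OF subset_enlargement[OF U_subset] enl_sets] by auto

lemma S_antimono: "v \<le> u \<Longrightarrow> S u \<le> S v"
  unfolding S_def using finite_measure_mono[OF enlargement_mono enl_sets] by auto

context
  fixes \<rho> t :: real
  assumes rho_pos: "0 < \<rho>" and rho_le_r: "\<rho> \<le> r" and rho_le_t: "\<rho> \<le> t"
    and S_pos: "0 < S (t + \<rho>)"
begin

lemma S0_pos: "0 < S0"
  using S_pos S_le_S0[of "t + \<rho>"] rho_pos rho_le_t by simp

lemma A_nonempty: "i \<in> {1..k} \<Longrightarrow> A i \<noteq> {}"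
  using S0_le_measure_A[of i] S0_pos by auto

lemma enl_t_nonempty: "enl t \<noteq> {}"
  using subset_enlargement[OF U_subset, of t] A_nonempty[of 1] k_pos rho_pos rho_le_t
  unfolding U_def by auto

definition \<phi> :: "nat \<Rightarrow> 'a \<Rightarrow> real" where
  "\<phi> j x = (if j = 0 then clamp01 (4 / \<rho> * minfdist x (enl t) - 1)
            else clamp01 (2 - 4 / \<rho> * minfdist x (A j)))"

lemma \<phi>_lipschitz:
  assumes "j \<le> k" "x \<in> E" "y \<in> E"
  shows "\<bar>\<phi> j x - \<phi> j y\<bar> \<le> 4 / \<rho> * d x y"
proof -
  obtain T where T: "T \<subseteq> E" "T \<noteq> {}"
    and le: "\<bar>\<phi> j x - \<phi> j y\<bar> \<le> 4 / \<rho> * \<bar>minfdist x T - minfdist y T\<bar>"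
  proof (cases "j = 0")
    case True
    have "\<bar>\<phi> j x - \<phi> j y\<bar>
        \<le> \<bar>(4 / \<rho> * minfdist x (enl t) - 1) - (4 / \<rho> * minfdist y (enl t) - 1)\<bar>"
      unfolding \<phi>_def using True by (simp only: simp_thms if_True clamp01_lipschitz)
    also have "\<dots> = \<bar>4 / \<rho> * (minfdist x (enl t) - minfdist y (enl t))\<bar>"
      by (simp only: right_diff_distrib diff_diff_eq2)
    also have "\<dots> = 4 / \<rho> * \<bar>minfdist x (enl t) - minfdist y (enl t)\<bar>"
      by (simp only: abs_mult) (simp add: rho_pos less_imp_le)
    finally show thesis using that[of "enl t"] enl_t_nonempty by (auto simp: enlargement_def)
  next
    case False
    hence j: "j \<in> {1..k}" using assms(1) by auto
    have "\<bar>\<phi> j x - \<phi> j y\<bar>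
        \<le> \<bar>(2 - 4 / \<rho> * minfdist x (A j)) - (2 - 4 / \<rho> * minfdist y (A j))\<bar>"
      unfolding \<phi>_def using False by (simp only: if_False clamp01_lipschitz)
    also have "\<dots> = \<bar>4 / \<rho> * (minfdist x (A j) - minfdist y (A j))\<bar>"
      by (simp only: abs_minus_commute right_diff_distrib)
    also have "\<dots> = 4 / \<rho> * \<bar>minfdist x (A j) - minfdist y (A j)\<bar>"
      by (simp only: abs_mult) (simp add: rho_pos less_imp_le)
    finally show thesis using that[of "A j"] A_subset[OF j] A_nonempty[OF j] by auto
  qed
  note le
  also have "\<dots> \<le> 4 / \<rho> * d x y"
    using minfdist_lipschitz[OF T assms(2,3)] rho_pos by (intro mult_left_mono) auto
  finally show ?thesis .
qed

lemma \<phi>_A_eq_1: "minfdist x (A j) \<le> \<rho> / 4 \<Longrightarrow> j \<noteq> 0 \<Longrightarrow> \<phi> j x = 1"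
  and \<phi>_A_eq_0: "\<rho> / 2 \<le> minfdist x (A j) \<Longrightarrow> j \<noteq> 0 \<Longrightarrow> \<phi> j x = 0"
  and \<phi>_0_eq_0: "minfdist x (enl t) \<le> \<rho> / 4 \<Longrightarrow> \<phi> 0 x = 0"
  and \<phi>_0_eq_1: "\<rho> / 2 \<le> minfdist x (enl t) \<Longrightarrow> \<phi> 0 x = 1"
  unfolding \<phi>_def using rho_pos
  by (auto intro!: clamp01_eq_0 clamp01_eq_1 simp: field_simps)

abbreviation \<Phi> :: "(nat \<Rightarrow> real) \<Rightarrow> 'a \<Rightarrow> real" where
  "\<Phi> c \<equiv> \<lambda>x. \<Sum>j\<le>k. c j * \<phi> j x"

lemma \<phi>_vanishes_near_A:
  assumes i: "i \<in> {1..k}" and y: "y \<in> E" and near: "minfdist y (A i) < \<rho>"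
    and j: "j \<le> k" "j \<noteq> i"
  shows "\<phi> j y = 0"
proof (cases "j = 0")
  case True
  obtain a where "a \<in> A i" "d y a < \<rho>" using near minfdist_less_iff[OF A_nonempty[OF i]] by auto
  hence "y \<in> enl t" using i y rho_le_t unfolding U_def enlargement_def by force
  thus ?thesis using True minfdist_eq_0[of y "enl t"] rho_pos
    by (auto intro: \<phi>_0_eq_0 simp: enlargement_def)
next
  case False
  hence j1: "j \<in> {1..k}" using j by auto
  have "2 * r \<le> minfdist y (A i) + minfdist y (A j)"
    using minfdist_A_sum_ge[OF i j1 _ A_nonempty[OF i] A_nonempty[OF j1] y] j by auto
  thus ?thesis using near rho_le_r rho_pos False by (intro \<phi>_A_eq_0) auto
qed

lemma \<Phi>_near_A:
  assumes "i \<in> {1..k}" "y \<in> E" "minfdist y (A i) < \<rho>"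
  shows "\<Phi> c y = c i * \<phi> i y"
  using assms \<phi>_vanishes_near_A by (intro sum_eq_single_term) auto

lemma \<Phi>_far_from_A:
  assumes "\<And>i. i \<in> {1..k} \<Longrightarrow> \<rho> / 2 \<le> minfdist y (A i)"
  shows "\<Phi> c y = c 0 * \<phi> 0 y"
  using assms \<phi>_A_eq_0 by (intro sum_eq_single_term) auto

lemma minfdist_ge_outside_enl:
  assumes x: "x \<in> E - enl (t + \<rho>)"
  shows "\<rho> \<le> minfdist x (enl t)" and "i \<in> {1..k} \<Longrightarrow> \<rho> \<le> minfdist x (A i)"
proof -
  show "\<rho> \<le> minfdist x (enl t)"
  proof (rule ccontr)
    assume "\<not> \<rho> \<le> minfdist x (enl t)"
    hence "x \<in> enlargement E d (enl t) \<rho>"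
      using x enl_t_nonempty by (simp add: enlargement_eq)
    thus False using x enlargement_enlargement[OF U_subset] by blast
  qed
  assume i: "i \<in> {1..k}"
  show "\<rho> \<le> minfdist x (A i)"
  proof (rule ccontr)
    assume "\<not> \<rho> \<le> minfdist x (A i)"
    then obtain a where "a \<in> A i" "d x a < \<rho>"
      using minfdist_less_iff[OF A_nonempty[OF i], of x \<rho>] by (auto simp: not_le)
    moreover have "d x a < t + \<rho>" using \<open>d x a < \<rho>\<close> rho_pos rho_le_t by linarith
    ultimately have "x \<in> enl (t + \<rho>)" using i x unfolding U_def enlargement_def by blast
    thus False using x by blast
  qed
qed

definition X :: "nat \<Rightarrow> 'a set" where
  "X j = (if j = 0 then E - enl (t + \<rho>) else A j)"

lemma \<phi>_on_X:
  assumes "i \<le> k" "j \<le> k" "x \<in> X j"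
  shows "\<phi> i x = (if i = j then 1 else 0)"
proof (cases "j = 0")
  case True
  hence x: "x \<in> E - enl (t + \<rho>)" using assms(3) by (simp add: X_def)
  show ?thesis
  proof (cases "i = 0")
    case False
    hence "\<rho> / 2 \<le> minfdist x (A i)" using minfdist_ge_outside_enl(2)[OF x, of i] assms(1) rho_pos by auto
    thus ?thesis using False True by (simp add: \<phi>_A_eq_0)
  qed (use True minfdist_ge_outside_enl(1)[OF x] rho_pos in \<open>simp add: \<phi>_0_eq_1\<close>)
next
  case False
  hence j: "j \<in> {1..k}" "x \<in> A j" using assms(2,3) by (auto simp: X_def)
  have x: "x \<in> E" "minfdist x (A j) = 0" using j A_subset[OF j(1)] minfdist_eq_0 by auto
  show ?thesis
    using False \<phi>_vanishes_near_A[OF j(1) x(1) _ assms(1)] x(2) rho_pos by (auto intro: \<phi>_A_eq_1)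
qed

lemma X_sets: "j \<le> k \<Longrightarrow> X j \<in> sets \<mu>"
  unfolding X_def using enl_sets space_eq A_sets by (auto intro!: sets.compl_sets)

lemma X_disjoint: "disjoint_family_on X {..k}"
proof -
  have "U \<subseteq> enl (t + \<rho>)" using rho_pos rho_le_t by (intro subset_enlargement[OF U_subset]) simp
  hence sub: "A i \<subseteq> enl (t + \<rho>)" if "i \<in> {1..k}" for i using that unfolding U_def by blast
  show ?thesis
    unfolding disjoint_family_on_def
  proof (intro ballI impI)
    fix m n assume "m \<in> {..k}" "n \<in> {..k}" "m \<noteq> n"
    thus "X m \<inter> X n = {}"
      using sub[of m] sub[of n] A_disjoint[unfolded disjoint_family_on_def, rule_format, of m n]
      unfolding X_def by (cases "m = 0"; cases "n = 0") auto
  qed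
qed

lemma measure_X:
  "measure \<mu> (X 0) = S (t + \<rho>)" "j \<in> {1..k} \<Longrightarrow> S0 \<le> measure \<mu> (X j)"
  using prob_compl[OF enl_sets] space_eq S0_le_measure_A unfolding X_def S_def by auto

lemma \<phi>_H1: "j \<le> k \<Longrightarrow> \<phi> j \<in> H1 E d \<mu>"
  using \<phi>_lipschitz rho_pos by (intro lipschitz_in_H1[OF space_eq sets_eq, of "4 / \<rho>" _ 1])
    (auto simp: \<phi>_def clamp01_def finite_measure_axioms)

lemma \<phi>_L2_indep: "L2_indep \<mu> k \<phi>"
proof (rule L2_indep_of_plateaus[OF X_sets X_disjoint _ \<phi>_on_X])
  fix j assume "j \<le> k"
  show "0 < emeasure \<mu> (X j)"
  proof (cases "j = 0")
    case False
    hence "S0 \<le> measure \<mu> (X j)" using \<open>j \<le> k\<close> measure_X(2) by simp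
    thus ?thesis using S0_pos by (simp add: emeasure_eq_measure)
  qed (use measure_X(1) S_pos in \<open>simp add: emeasure_eq_measure\<close>)
qed

lemma sq_norm_\<Phi>_ge:
  "ennreal ((c 0)\<^sup>2 * S (t + \<rho>) + (\<Sum>i\<in>{1..k}. (c i)\<^sup>2) * S0) \<le> sq_norm \<mu> (\<Phi> c)"
proof -
  have split: "{..k} = insert 0 {1..k}" by auto
  have "(\<Sum>i\<in>{1..k}. (c i)\<^sup>2) * S0 \<le> (\<Sum>i\<in>{1..k}. (c i)\<^sup>2 * measure \<mu> (X i))"
    unfolding sum_distrib_right using measure_X(2) by (intro sum_mono mult_left_mono) auto
  hence "(c 0)\<^sup>2 * S (t + \<rho>) + (\<Sum>i\<in>{1..k}. (c i)\<^sup>2) * S0 \<le> (\<Sum>j\<le>k. (c j)\<^sup>2 * measure \<mu> (X j))"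
    using measure_X(1) by (simp add: split)
  also have "ennreal \<dots> = (\<Sum>j\<le>k. ennreal ((c j)\<^sup>2) * emeasure \<mu> (X j))"
    by (simp add: emeasure_eq_measure ennreal_mult sum_ennreal[symmetric])
  also have "\<dots> \<le> sq_norm \<mu> (\<Phi> c)"
    using \<phi>_on_X X_sets X_disjoint by (intro sq_norm_ge_plateaus) (auto simp: sum_eq_single_term)
  finally show ?thesis by (simp add: ennreal_leI)
qed

(* Outside R0 \<union> R1 every \<Phi> c is locally constant. *)
definition R0 :: "'a set" where "R0 = enl (t + \<rho>) - enl t"

definition R1 :: "'a set" where "R1 = enl \<rho> - U"

lemma mem_A_if_near_A:
  assumes i: "i \<in> {1..k}" and "x \<in> U" and near: "minfdist x (A i) < \<rho>"
  shows "x \<in> A i"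
proof (rule ccontr)
  assume "x \<notin> A i"
  then obtain j where j: "j \<in> {1..k}" "j \<noteq> i" "x \<in> A j" using \<open>x \<in> U\<close> unfolding U_def by blast
  have "2 * r \<le> minfdist x (A i) + minfdist x (A j)"
    using minfdist_A_sum_ge[OF i j(1) _ A_nonempty[OF i] A_nonempty[OF j(1)]] j A_subset by blast
  moreover have "minfdist x (A j) = 0" by (rule minfdist_eq_0[OF j(3) A_subset[OF j(1)]])
  ultimately show False using near rho_le_r r_pos by linarith
qed

lemma \<Phi>_eq_near_point_near_A:
  assumes i: "i \<in> {1..k}" and x: "x \<in> E" and y: "y \<in> E" "d x y < \<rho> - minfdist x (A i)"
  shows "\<Phi> c y = c i * \<phi> i y"
proof (rule \<Phi>_near_A[OF i y(1)])
  have "minfdist y (A i) \<le> d y x + minfdist x (A i)"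
    by (rule minfdist_triangle[OF A_subset[OF i] A_nonempty[OF i] y(1) x])
  thus "minfdist y (A i) < \<rho>" using y commute[of x y] by simp
qed

lemma \<Phi>_eq_near_point_far_from_A:
  assumes x: "x \<in> E" and far: "\<And>i. i \<in> {1..k} \<Longrightarrow> \<rho> \<le> minfdist x (A i)"
    and y: "y \<in> E" "d x y < \<rho> / 2"
  shows "\<Phi> c y = c 0 * \<phi> 0 y"
proof (rule \<Phi>_far_from_A)
  fix i assume i: "i \<in> {1..k}"
  have "minfdist x (A i) \<le> d x y + minfdist y (A i)"
    by (rule minfdist_triangle[OF A_subset[OF i] A_nonempty[OF i] x y(1)])
  thus "\<rho> / 2 \<le> minfdist y (A i)" using far[OF i] y by simp
qed

lemma local_lip_\<Phi>_near_A:
  assumes i: "i \<in> {1..k}" and x: "x \<in> E" and near: "minfdist x (A i) < \<rho>"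
  shows "local_lip E d (\<Phi> c) x \<le> ennreal (4 / \<rho> * \<bar>c i\<bar> * indicator R1 x)"
proof (cases "x \<in> U")
  case True
  hence x0: "minfdist x (A i) = 0" using mem_A_if_near_A[OF i _ near] A_subset[OF i] minfdist_eq_0 by blast
  have "local_lip E d (\<Phi> c) x = 0"
  proof (rule local_lip_locally_constant[of "\<rho> / 4"])
    fix y assume y: "y \<in> E" "d x y < \<rho> / 4"
    have "minfdist y (A i) \<le> d y x + minfdist x (A i)"
      by (rule minfdist_triangle[OF A_subset[OF i] A_nonempty[OF i] y(1) x])
    hence "\<phi> i y = 1" "\<phi> i x = 1" using x0 y commute[of x y] rho_pos i by (auto intro: \<phi>_A_eq_1)
    thus "\<Phi> c y = \<Phi> c x"
      using \<Phi>_eq_near_point_near_A[OF i x y(1)] \<Phi>_eq_near_point_near_A[OF i x x] x x0 y rho_pos by simp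
  qed (use rho_pos in simp)
  thus ?thesis by simp
next
  case False
  obtain a where "a \<in> A i" "d x a < \<rho>" using near minfdist_less_iff[OF A_nonempty[OF i]] by auto
  hence "x \<in> R1" using False i x unfolding R1_def U_def enlargement_def by blast
  have "local_lip E d (\<Phi> c) x \<le> ennreal (\<bar>c i\<bar> * (4 / \<rho>))"
    using near rho_pos \<Phi>_eq_near_point_near_A[OF i x] \<phi>_lipschitz[of i x] i x
    by (intro local_lip_le_scaled[OF x, of "\<rho> - minfdist x (A i)"]) auto
  thus ?thesis using \<open>x \<in> R1\<close> by (simp add: mult.commute)
qed

lemma local_lip_\<Phi>_far_from_A:
  assumes x: "x \<in> E" and far: "\<And>i. i \<in> {1..k} \<Longrightarrow> \<rho> \<le> minfdist x (A i)"
  shows "local_lip E d (\<Phi> c) x \<le> ennreal (4 / \<rho> * \<bar>c 0\<bar> * indicator R0 x)"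
proof -
  have \<Phi>_eq: "\<Phi> c y = c 0 * \<phi> 0 y" if "y \<in> E" "d x y < \<rho> / 2" for y
    using x far that by (rule \<Phi>_eq_near_point_far_from_A)
  have triangle_enl_t: "minfdist y (enl t) \<le> d y z + minfdist z (enl t)" if "y \<in> E" "z \<in> E" for y z
    using minfdist_triangle[OF _ enl_t_nonempty that] by (auto simp: enlargement_def)
  consider "x \<in> enl t" | "x \<in> E - enl (t + \<rho>)" | "x \<in> R0"
    using x unfolding R0_def by blast
  thus ?thesis
  proof cases
    case 1
    hence x0: "minfdist x (enl t) = 0" by (rule minfdist_eq_0) (auto simp: enlargement_def)
    have "local_lip E d (\<Phi> c) x = 0"
    proof (rule local_lip_locally_constant[of "\<rho> / 4"])
      fix y assume y: "y \<in> E" "d x y < \<rho> / 4"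
      hence "\<phi> 0 y = 0" "\<phi> 0 x = 0"
        using triangle_enl_t[OF y(1) x] x0 commute[of x y] rho_pos by (auto intro: \<phi>_0_eq_0)
      thus "\<Phi> c y = \<Phi> c x" using \<Phi>_eq[OF y(1)] \<Phi>_eq[OF x] x y rho_pos by simp
    qed (use rho_pos in simp)
    thus ?thesis by simp
  next
    case 2
    have "local_lip E d (\<Phi> c) x = 0"
    proof (rule local_lip_locally_constant[of "\<rho> / 2"])
      fix y assume y: "y \<in> E" "d x y < \<rho> / 2"
      hence "\<phi> 0 y = 1" "\<phi> 0 x = 1"
        using triangle_enl_t[OF x y(1)] minfdist_ge_outside_enl(1)[OF 2] rho_pos by (auto intro: \<phi>_0_eq_1)
      thus "\<Phi> c y = \<Phi> c x" using \<Phi>_eq[OF y] \<Phi>_eq[OF x] x rho_pos by simp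
    qed (use rho_pos in simp)
    thus ?thesis by simp
  next
    case 3
    have "local_lip E d (\<Phi> c) x \<le> ennreal (\<bar>c 0\<bar> * (4 / \<rho>))"
      using x rho_pos \<Phi>_eq \<phi>_lipschitz[of 0 x] by (intro local_lip_le_scaled[OF x, of "\<rho> / 2"]) auto
    thus ?thesis using 3 by (simp add: mult.commute)
  qed
qed

lemma local_lip_\<Phi>_sq_le:
  assumes x: "x \<in> E"
  shows "(local_lip E d (\<Phi> c) x)\<^sup>2
           \<le> ennreal (16 / \<rho>\<^sup>2 * ((c 0)\<^sup>2 * indicator R0 x + (\<Sum>i\<in>{1..k}. (c i)\<^sup>2) * indicator R1 x))"
proof (cases "\<exists>i\<in>{1..k}. minfdist x (A i) < \<rho>")
  case True
  then obtain i where i: "i \<in> {1..k}" "minfdist x (A i) < \<rho>" by blast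
  have "(c i)\<^sup>2 \<le> (\<Sum>i\<in>{1..k}. (c i)\<^sup>2)" using i(1) by (intro member_le_sum) auto
  hence "(c i)\<^sup>2 * indicator R1 x \<le> (c 0)\<^sup>2 * indicator R0 x + (\<Sum>i\<in>{1..k}. (c i)\<^sup>2) * indicator R1 x"
    by (intro add_increasing mult_right_mono) auto
  hence "16 / \<rho>\<^sup>2 * ((c i)\<^sup>2 * indicator R1 x)
      \<le> 16 / \<rho>\<^sup>2 * ((c 0)\<^sup>2 * indicator R0 x + (\<Sum>i\<in>{1..k}. (c i)\<^sup>2) * indicator R1 x)"
    by (rule mult_left_mono) simp
  moreover have "(4 / \<rho> * \<bar>c i\<bar> * indicator R1 x)\<^sup>2 = 16 / \<rho>\<^sup>2 * ((c i)\<^sup>2 * indicator R1 x)"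
    by (simp add: power_mult_distrib power_divide indicator_def)
  ultimately show ?thesis
    using rho_pos by (intro power2_le_ennreal[OF local_lip_\<Phi>_near_A[OF i(1) x i(2)]]) auto
next
  case False
  hence far: "\<And>i. i \<in> {1..k} \<Longrightarrow> \<rho> \<le> minfdist x (A i)" by (simp add: not_less)
  have "16 / \<rho>\<^sup>2 * ((c 0)\<^sup>2 * indicator R0 x)
      \<le> 16 / \<rho>\<^sup>2 * ((c 0)\<^sup>2 * indicator R0 x + (\<Sum>i\<in>{1..k}. (c i)\<^sup>2) * indicator R1 x)"
    by (intro mult_left_mono add_increasing2) (auto simp: sum_nonneg)
  moreover have "(4 / \<rho> * \<bar>c 0\<bar> * indicator R0 x)\<^sup>2 = 16 / \<rho>\<^sup>2 * ((c 0)\<^sup>2 * indicator R0 x)"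
    by (simp add: power_mult_distrib power_divide indicator_def)
  ultimately show ?thesis using rho_pos by (intro power2_le_ennreal[OF local_lip_\<Phi>_far_from_A[OF x far]]) auto
qed

lemma dirichlet_\<Phi>_le:
  "dirichlet E d \<mu> (\<Phi> c)
     \<le> ennreal (16 / \<rho>\<^sup>2 * ((c 0)\<^sup>2 * (S t - S (t + \<rho>)) + (\<Sum>i\<in>{1..k}. (c i)\<^sup>2) * (S0 - S \<rho>)))"
proof -
  define s where "s = (\<Sum>i\<in>{1..k}. (c i)\<^sup>2)"
  have R_sets: "R0 \<in> sets \<mu>" "R1 \<in> sets \<mu>" unfolding R0_def R1_def using enl_sets U_sets by auto
  have "dirichlet E d \<mu> (\<Phi> c)
      \<le> (\<integral>\<^sup>+x. ennreal (16 / \<rho>\<^sup>2 * (c 0)\<^sup>2 * indicator R0 x + 16 / \<rho>\<^sup>2 * s * indicator R1 x) \<partial>\<mu>)"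
    unfolding dirichlet_def s_def using local_lip_\<Phi>_sq_le space_eq
    by (intro nn_integral_mono) (simp add: algebra_simps)
  also have "\<dots> = ennreal (16 / \<rho>\<^sup>2 * (c 0)\<^sup>2 * measure \<mu> R0 + 16 / \<rho>\<^sup>2 * s * measure \<mu> R1)"
    using R_sets by (intro nn_integral_two_indicators) (auto simp: s_def sum_nonneg)
  also have "measure \<mu> R0 = S t - S (t + \<rho>)"
    unfolding R0_def S_def using finite_measure_Diff[OF enl_sets enl_sets enlargement_mono] rho_pos by simp
  also have "measure \<mu> R1 = S0 - S \<rho>"
    unfolding R1_def S_def S0_def
    using finite_measure_Diff[OF enl_sets U_sets subset_enlargement[OF U_subset rho_pos]] by simp
  finally show ?thesis unfolding s_def by (simp only: distrib_left mult.assoc)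
qed

lemma lambda_k_le_max_ratio:
  "lambda_k E d \<mu> k \<le> ennreal (16 / \<rho>\<^sup>2 * max ((S t - S (t + \<rho>)) / S (t + \<rho>)) ((S0 - S \<rho>) / S0))"
proof (rule lambda_k_le[OF \<phi>_H1 \<phi>_L2_indep])
  fix c :: "nat \<Rightarrow> real"
  define M where "M = max ((S t - S (t + \<rho>)) / S (t + \<rho>)) ((S0 - S \<rho>) / S0)"
  define s where "s = (\<Sum>i\<in>{1..k}. (c i)\<^sup>2)"
  have M: "0 \<le> M" unfolding M_def using S_le_S0[OF rho_pos] S0_pos by (simp add: max.coboundedI2)
  have "(S t - S (t + \<rho>)) * (c 0)\<^sup>2 + (S0 - S \<rho>) * s \<le> M * (S (t + \<rho>) * (c 0)\<^sup>2 + S0 * s)"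
    unfolding M_def by (rule mediant_le_max) (use S_pos S0_pos in \<open>auto simp: s_def sum_nonneg\<close>)
  hence "16 / \<rho>\<^sup>2 * ((c 0)\<^sup>2 * (S t - S (t + \<rho>)) + s * (S0 - S \<rho>))
      \<le> 16 / \<rho>\<^sup>2 * (M * ((c 0)\<^sup>2 * S (t + \<rho>) + s * S0))"
    by (intro mult_left_mono) (simp_all add: mult.commute)
  hence "dirichlet E d \<mu> (\<Phi> c) \<le> ennreal (16 / \<rho>\<^sup>2 * (M * ((c 0)\<^sup>2 * S (t + \<rho>) + s * S0)))"
    using dirichlet_\<Phi>_le[of c] unfolding s_def by (meson ennreal_leI order_trans)
  also have "\<dots> = ennreal (16 / \<rho>\<^sup>2 * M) * ennreal ((c 0)\<^sup>2 * S (t + \<rho>) + s * S0)"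
    using M S_nonneg[of "t + \<rho>"] S0_pos unfolding mult.assoc[symmetric]
    by (intro ennreal_mult) (auto simp: s_def sum_nonneg)
  also have "\<dots> \<le> ennreal (16 / \<rho>\<^sup>2 * M) * sq_norm \<mu> (\<Phi> c)"
    using sq_norm_\<Phi>_ge[of c] unfolding s_def by (rule mult_left_mono) simp
  finally show "dirichlet E d \<mu> (\<Phi> c) \<le> ennreal (16 / \<rho>\<^sup>2 * M) * sq_norm \<mu> (\<Phi> c)" .
qed

end

(* enn2real sends \<infinity> to 0; that case is treated separately. *)
abbreviation lam :: real where
  "lam \<equiv> enn2real (lambda_k E d \<mu> k)"

lemma lam_scaled_le_max_ratio:
  assumes "0 < \<rho>" "\<rho> \<le> r" "\<rho> \<le> t" "0 < S (t + \<rho>)"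
  shows "lam * \<rho>\<^sup>2 / 16 \<le> max ((S t - S (t + \<rho>)) / S (t + \<rho>)) ((S0 - S \<rho>) / S0)"
proof -
  define M where "M = max ((S t - S (t + \<rho>)) / S (t + \<rho>)) ((S0 - S \<rho>) / S0)"
  have "0 \<le> M" unfolding M_def using S_le_S0[OF assms(1)] S0_pos[OF assms] by (simp add: max.coboundedI2)
  hence "lam \<le> 16 / \<rho>\<^sup>2 * M"
    using lambda_k_le_max_ratio[OF assms] unfolding M_def[symmetric] by (intro enn2real_leI) auto
  hence "lam * \<rho>\<^sup>2 \<le> 16 / \<rho>\<^sup>2 * M * \<rho>\<^sup>2" by (rule mult_right_mono) simp
  also have "\<dots> = 16 * M" using assms(1) by simp
  finally show ?thesis unfolding M_def by simp
qed

lemma S_contraction_first: "S r * (1 + lam * r\<^sup>2 / 64) \<le> S0"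
proof (cases "S r = 0")
  case True thus ?thesis using S_le_S0[OF r_pos] by simp
next
  case False
  define L where "L = lam * (r / 2)\<^sup>2 / 16"
  have L: "0 \<le> L" "lam * r\<^sup>2 / 64 = L" unfolding L_def by (simp_all add: power_divide)
  have pos: "0 < S (r / 2 + r / 2)" using False S_nonneg[of r] by simp
  have "L \<le> (S (r / 2) - S r) / S r \<or> L \<le> (S0 - S (r / 2)) / S0"
    using lam_scaled_le_max_ratio[of "r / 2" "r / 2"] r_pos pos unfolding L_def by (simp add: le_max_iff_disj)
  thus ?thesis
  proof
    assume "L \<le> (S (r / 2) - S r) / S r"
    hence "S r * (1 + L) \<le> S (r / 2)" using pos by (simp add: pos_le_divide_eq algebra_simps)
    thus ?thesis using S_le_S0[of "r / 2"] r_pos L by simp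
  next
    assume "L \<le> (S0 - S (r / 2)) / S0"
    hence "S (r / 2) \<le> S0 * (1 - L)" using S0_pos[of "r / 2" "r / 2"] r_pos pos
      by (simp add: pos_le_divide_eq algebra_simps)
    moreover have "S r \<le> S (r / 2)" using r_pos by (intro S_antimono) simp
    ultimately have "S r * (1 + L) \<le> S0 * (1 - L) * (1 + L)" using L by (intro mult_right_mono) auto
    also have "\<dots> \<le> S0" using L S0_pos[of "r / 2" "r / 2"] r_pos pos by (simp add: algebra_simps)
    finally show ?thesis using L by simp
  qed
qed

lemma S_contraction_step:
  assumes "0 < \<rho>" "\<rho> \<le> t" "t + \<rho> \<le> r" and big: "1 < lam * \<rho>\<^sup>2 / 16"
  shows "S (t + \<rho>) * (1 + lam * \<rho>\<^sup>2 / 16) \<le> S t"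
proof (cases "S (t + \<rho>) = 0")
  case True thus ?thesis using S_nonneg[of t] by simp
next
  case False
  hence pos: "0 < S (t + \<rho>)" using S_nonneg[of "t + \<rho>"] by simp
  have rho_r: "\<rho> \<le> r" using assms by simp
  have "(S0 - S \<rho>) / S0 \<le> 1" using S_nonneg[of \<rho>] S0_pos[OF assms(1) rho_r assms(2) pos] by simp
  hence "lam * \<rho>\<^sup>2 / 16 \<le> (S t - S (t + \<rho>)) / S (t + \<rho>)"
    using lam_scaled_le_max_ratio[OF assms(1) rho_r assms(2) pos] big by (meson le_max_iff_disj order.trans not_le)
  thus ?thesis using pos by (simp add: pos_le_divide_eq algebra_simps)
qed

lemma S_eq_0_if_lambda_k_infinite:
  assumes "lambda_k E d \<mu> k = \<infinity>"
  shows "S r = 0"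
proof (rule ccontr)
  assume "S r \<noteq> 0"
  hence "0 < S (r / 2 + r / 2)" using S_nonneg[of r] by simp
  from lambda_k_le_max_ratio[of "r / 2" "r / 2", OF _ _ _ this] show False
    using assms r_pos by (simp add: top_unique)
qed

lemma concentration_inequality: "1 - S0 * conc_factor (1/128) r (lambda_k E d \<mu> k) \<le> measure \<mu> (enl r)"
proof (cases "lambda_k E d \<mu> k = \<infinity>")
  case True
  thus ?thesis using S_eq_0_if_lambda_k_infinite unfolding conc_factor_def S_def by simp
next
  case False
  have "S r \<le> S0 * exp (- (1/128) * min (r\<^sup>2 * lam) (r * sqrt lam))"
    using r_pos S_le_S0 S_contraction_first S_contraction_step
    by (intro concentration_decay[where S = S]) (auto intro: S_antimono order_trans[OF S_nonneg S_le_S0])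
  thus ?thesis using False unfolding conc_factor_def S_def by simp
qed

end

theorem theorem1p1:
  shows "\<exists>c::real. c > 0 \<and>
    (\<forall>(E::'a set) d (\<mu>::'a measure) (k::nat) (A::nat \<Rightarrow> 'a set) r.
       Metric_space E d \<and> Metric_space.mcomplete E d \<and>
       separable_space (Metric_space.mtopology E d) \<and>
       space \<mu> = E \<and> sets \<mu> = metric_borel E d \<and> prob_space \<mu> \<and>
       k \<ge> 1 \<and> (\<forall>i\<in>{1..k}. A i \<in> sets \<mu>) \<and>
       (\<forall>i\<in>{1..k}. \<forall>j\<in>{1..k}. i \<noteq> j \<longrightarrow> set_dist d (A i) (A j) > 0) \<and>
       (\<lambda>i. measure \<mu> (A i)) \<in> Delta k \<and>
       0 < r \<and>
       (\<forall>i\<in>{1..k}. \<forall>j\<in>{1..k}. i \<noteq> j \<longrightarrow> ereal (2 * r) \<le> set_dist d (A i) (A j))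
     \<longrightarrow> measure \<mu> (enlargement E d (\<Union>i\<in>{1..k}. A i) r)
           \<ge> 1 - (1 - measure \<mu> (\<Union>i\<in>{1..k}. A i)) * conc_factor c r (lambda_k E d \<mu> k))"
proof (intro exI[of _ "1/128 :: real"] conjI allI impI, goal_cases)
  case (2 E d \<mu> k A r)
  then interpret separated_sets E d \<mu> k A r
    by (auto simp: separated_sets_def separated_sets_axioms_def)
  show ?case using concentration_inequality unfolding S0_def U_def .
qed simp

end
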